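(* The capacity region $\mathcal{C}_D$ of the deterministic many-to-one interference channel with gains $n_{ii}$ ($0\le i\le K$) and $n_{0i}$ ($1\le i\le K$) is contained in the set $\overline{\mathcal{C}}$ of nonnegative rate tuples $(r_0,\dots,r_K)$ satisfying the individual rate constraints $$r_i\le n_{ii},\qquad 0\le i\le K,$$ and the $2^K-1$ sum-rate constraints $$r_0+\sum_{i\in S}r_i\le f_{\rm free}(S)+\sum_{k=1}^{n_{00}}f_k(S),\qquad \varnothing\neq S\subseteq\{1,\dots,K\}.$$
   Context: Deterministic many-to-one interference channel: there are $K+1$ users $0,1,\dots,K$ with nonnegative integer gains $n_{ii}$ ($0\le i\le K$) and $n_{0i}$ ($1\le i\le K$); let $q=\max$ of all these gains. At each time the input of user $i$ is $x_i\in\mathbb{F}_2^q$, the outputs are $y_0=\sum_{j=0}^K \mathbf{S}^{q-n_{0j}}x_j$ (with $n_{00}$ the direct gain of user 0) and $y_i=\mathbf{S}^{q-n_{ii}}x_i$ for $1\le i\le K$, where arithmetic is over $\mathbb{F}_2$ and $\mathbf S$ is the $q\times q$ down-shift matrix (ones on the subdiagonal, zeros elsewhere). Each transmitter $i$ has an independent uniformly distributed message to be decoded by receiver $i$; the capacity region is the closure of the set of rate tuples (bits per channel use) for which the error probabilities can be made to vanish. Notation: $(a)^+=\max(a,0)$. For $1\le k\le n_{00}$ let $U_k=\{i:1\le i\le K,\ n_{0i}-n_{ii}<k\le n_{0i}\}$ (the users interfering at level $k$ of receiver 0). For $S\subseteq\{1,\dots,K\}$ let $f_k(S)=\max(|U_k\cap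 S|,1)$, $f_{\rm free}(i)=(n_{ii}-n_{0i})^+ +(n_{0i}-n_{00})^+$ and $f_{\rm free}(S)=\sum_{i\in S}f_{\rm free}(i)$. *)

theory Defs
  imports "HOL-Analysis.Analysis"
begin

text \<open>Gains are given by n :: nat => nat => nat: n i i is the direct gain n_ii (0 <= i <= K),
  n 0 i is the cross gain n_0i (1 <= i <= K).  Vectors of F_2^q are functions nat => bool
  (only indices < q matter, index 0 = top level); False/True = 0/1 in F_2.
  Rate tuples are functions nat => real, with r i = 0 for i > K (product topology).\<close>

definition qmax :: "nat \<Rightarrow> (nat \<Rightarrow> nat \<Rightarrow> nat) \<Rightarrow> nat" where
  "qmax K n = Max ({n i i | i. i \<le> K} \<union> {n 0 i | i. 1 \<le> i \<and> i \<le> K})"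

text \<open>(S^m x) for the q x q down-shift matrix S (ones on the subdiagonal).\<close>
definition shiftv :: "nat \<Rightarrow> nat \<Rightarrow> (nat \<Rightarrow> bool) \<Rightarrow> nat \<Rightarrow> bool" where
  "shiftv q m x r = (r < q \<and> m \<le> r \<and> x (r - m))"

definition chan_out :: "nat \<Rightarrow> (nat \<Rightarrow> nat \<Rightarrow> nat) \<Rightarrow> nat \<Rightarrow> (nat \<Rightarrow> nat \<Rightarrow> bool) \<Rightarrow> nat \<Rightarrow> bool" where
  "chan_out K n i x =
     (if i = 0 then (\<lambda>r. odd (card {j \<in> {0..K}. shiftv (qmax K n) (qmax K n - n 0 j) (x j) r}))
      else shiftv (qmax K n) (qmax K n - n i i) (x i))"

text \<open>A code of block length N: enc j w t = input vector of user j at time t for message w;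
  dec i = decoder of receiver i applied to its received sequence (time => level => bit).\<close>
definition received :: "nat \<Rightarrow> (nat \<Rightarrow> nat \<Rightarrow> nat) \<Rightarrow> nat \<Rightarrow> (nat \<Rightarrow> nat \<Rightarrow> nat \<Rightarrow> nat \<Rightarrow> bool)
    \<Rightarrow> nat \<Rightarrow> (nat \<Rightarrow> nat) \<Rightarrow> nat \<Rightarrow> nat \<Rightarrow> bool" where
  "received K n N enc i w = (\<lambda>t. if t < N then chan_out K n i (\<lambda>j. enc j (w j) t) else (\<lambda>_. False))"

definition err_prob :: "nat \<Rightarrow> (nat \<Rightarrow> nat \<Rightarrow> nat) \<Rightarrow> nat \<Rightarrow> (nat \<Rightarrow> nat)
    \<Rightarrow> (nat \<Rightarrow> nat \<Rightarrow> nat \<Rightarrow> nat \<Rightarrow> bool) \<Rightarrow> (nat \<Rightarrow> (nat \<Rightarrow> nat \<Rightarrow> bool) \<Rightarrow> nat) \<Rightarrow> nat \<Rightarrow> real" where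
  "err_prob K n N m enc dec i =
     real (card {w \<in> PiE {0..K} (\<lambda>j. {..<m j}). dec i (received K n N enc i w) \<noteq> w i})
     / real (\<Prod>j\<in>{0..K}. m j)"

definition achievable :: "nat \<Rightarrow> (nat \<Rightarrow> nat \<Rightarrow> nat) \<Rightarrow> (nat \<Rightarrow> real) \<Rightarrow> bool" where
  "achievable K n r \<longleftrightarrow> (\<forall>i. 0 \<le> r i) \<and> (\<forall>i>K. r i = 0) \<and>
     (\<forall>\<epsilon>>0. \<exists>N0. \<forall>N\<ge>N0. \<exists>m enc dec.
        (\<forall>i\<le>K. 2 powr (real N * r i) \<le> real (m i)) \<and>
        (\<forall>i\<le>K. err_prob K n N m enc dec i \<le> \<epsilon>))"

definition capacity_region :: "nat \<Rightarrow> (nat \<Rightarrow> nat \<Rightarrow> nat) \<Rightarrow> (nat \<Rightarrow> real) set" where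
  "capacity_region K n = closure {r. achievable K n r}"

definition U :: "nat \<Rightarrow> (nat \<Rightarrow> nat \<Rightarrow> nat) \<Rightarrow> nat \<Rightarrow> nat set" where
  "U K n k = {i. 1 \<le> i \<and> i \<le> K \<and> n 0 i < k + n i i \<and> k \<le> n 0 i}"

definition f_lvl :: "nat \<Rightarrow> (nat \<Rightarrow> nat \<Rightarrow> nat) \<Rightarrow> nat \<Rightarrow> nat set \<Rightarrow> nat" where
  "f_lvl K n k S = max (card (U K n k \<inter> S)) 1"

definition f_free :: "(nat \<Rightarrow> nat \<Rightarrow> nat) \<Rightarrow> nat \<Rightarrow> nat" where
  "f_free n i = (n i i - n 0 i) + (n 0 i - n 0 0)"

definition outer_bound :: "nat \<Rightarrow> (nat \<Rightarrow> nat \<Rightarrow> nat) \<Rightarrow> (nat \<Rightarrow> real) set" where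
  "outer_bound K n = {r. (\<forall>i. 0 \<le> r i) \<and> (\<forall>i>K. r i = 0) \<and> (\<forall>i\<le>K. r i \<le> real (n i i)) \<and>
     (\<forall>S. S \<subseteq> {1..K} \<and> S \<noteq> {} \<longrightarrow>
        r 0 + (\<Sum>i\<in>S. r i) \<le> real ((\<Sum>i\<in>S. f_free n i) + (\<Sum>k=1..n 0 0. f_lvl K n k S)))}"

end

theory Submission
  imports Defs
begin

text \<open>A code whose decoders at the receivers of T each err with probability at most \<epsilon> decodes
  all of T correctly on at least a fraction 1 - card T * \<epsilon> of the message tuples. If an
  observation with at most 2 ^ (N * E) values determines each such tuple once the messages of the
  users outside T are known, then (1 - card T * \<epsilon>) * (\<Prod>j\<in>T. m j) \<le> 2 ^ (N * E), and letting
  N grow gives (\<Sum>j\<in>T. r j) \<le> E.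

  For T = {i} with i \<noteq> 0 the observation is the n i i top input bits of user i, which determine
  the output of receiver i. For T = {0} \<union> S a genie reveals the output of receiver 0 at the levels
  reached by some user of {0} \<union> S, the input bits of the users of S that receiver 0 does not see,
  and at every level k the bits of all users of U K n k \<inter> S but one. This determines the whole
  output of receiver 0 and hence the message of user 0; peeling the levels of receiver 0 from the
  top, the parity at level k then yields the one missing bit there, so every user of S is decoded
  as well. At most f_free S + (\<Sum>k=1..n 0 0. f_lvl K n k S) bits are revealed per channel use.\<close>

lemma sum_card_ge_eq_sum_diff:
  fixes f :: "'a \<Rightarrow> nat"
  assumes "finite S" and "\<forall>j\<in>S. f j \<le> q"
  shows "(\<Sum>k\<in>{a<..q}. card {j \<in> S. k \<le> f j}) = (\<Sum>j\<in>S. f j - a)"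
proof -
  have "(\<Sum>k\<in>{a<..q}. card {j \<in> S. k \<le> f j}) = (\<Sum>k\<in>{a<..q}. \<Sum>j\<in>S. if k \<le> f j then 1 else 0)"
    using assms(1) by (simp add: sum.If_cases Int_def)
  also have "\<dots> = (\<Sum>j\<in>S. \<Sum>k\<in>{a<..q}. if k \<le> f j then 1 else 0)"
    by (rule sum.swap)
  also have "\<dots> = (\<Sum>j\<in>S. f j - a)"
  proof (rule sum.cong[OF refl])
    fix j assume "j \<in> S"
    then have "{a<..q} \<inter> {k. k \<le> f j} = {a<..f j}"
      using assms(2) by auto
    then show "(\<Sum>k\<in>{a<..q}. if k \<le> f j then 1 else 0) = f j - a"
      by (simp add: sum.If_cases)
  qed
  finally show ?thesis .
qed

lemma odd_card_Collect_cancel: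
  assumes "finite J" "i \<in> J" "\<And>j. j \<in> J \<Longrightarrow> j \<noteq> i \<Longrightarrow> P j = P' j"
    and "odd (card {j \<in> J. P j}) = odd (card {j \<in> J. P' j})"
  shows "P i = P' i"
proof -
  have card_split: "card {j \<in> J. Q j} = card {j \<in> J - {i}. Q j} + (if Q i then 1 else 0)" for Q
  proof (cases "Q i")
    case True
    then have "{j \<in> J. Q j} = insert i {j \<in> J - {i}. Q j}"
      using assms(2) by auto
    then show ?thesis
      using True assms(1) by simp
  next
    case False
    then have "{j \<in> J. Q j} = {j \<in> J - {i}. Q j}"
      by auto
    then show ?thesis
      using False by simp
  qed
  have "{j \<in> J - {i}. P j} = {j \<in> J - {i}. P' j}"
    using assms(3) by auto
  then show ?thesis
    using assms(4) card_split[of P] card_split[of P'] by (cases "P i"; cases "P' i") auto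
qed

section \<open>Rate bounds by counting message tuples\<close>

lemma card_correctly_decoded_ge:
  assumes T: "T \<subseteq> {0..K}" and m_pos: "\<forall>j\<le>K. 0 < m j"
    and err: "\<forall>i\<in>T. err_prob K n N m enc dec i \<le> \<epsilon>"
  shows "(1 - real (card T) * \<epsilon>) * real (card (PiE {0..K} (\<lambda>j. {..<m j})))
    \<le> real (card {w \<in> PiE {0..K} (\<lambda>j. {..<m j}). \<forall>i\<in>T. dec i (received K n N enc i w) = w i})"
    (is "_ * real (card ?W) \<le> real (card ?Good)")
proof -
  define Bad where "Bad i = {w \<in> ?W. dec i (received K n N enc i w) \<noteq> w i}" for i
  have fin_W: "finite ?W" and fin_T: "finite T"
    using T by (auto simp: finite_PiE intro: finite_subset)
  have W_pos: "0 < real (card ?W)"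
    using m_pos by (simp add: card_PiE prod_pos del: of_nat_prod)
  have Bad_le: "real (card (Bad i)) \<le> \<epsilon> * real (card ?W)" if "i \<in> T" for i
    using err that W_pos
    by (simp add: err_prob_def Bad_def card_PiE pos_divide_le_eq mult.commute)
  have "?W - ?Good = (\<Union>i\<in>T. Bad i)"
    unfolding Bad_def by auto
  then have "real (card (?W - ?Good)) \<le> (\<Sum>i\<in>T. real (card (Bad i)))"
    by (metis card_UN_le[OF fin_T] of_nat_le_iff of_nat_sum)
  also have "\<dots> \<le> (\<Sum>i\<in>T. \<epsilon> * real (card ?W))"
    by (rule sum_mono) (rule Bad_le)
  also have "\<dots> = real (card T) * \<epsilon> * real (card ?W)"
    by simp
  finally show ?thesis
    using card_Diff_subset[of ?Good ?W] card_mono[OF fin_W, of ?Good] fin_W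
    by (simp add: algebra_simps of_nat_diff)
qed

lemma card_correctly_decoded_le:
  fixes obs :: "(nat \<Rightarrow> nat) \<Rightarrow> 'o"
  assumes obs: "obs ` PiE {0..K} (\<lambda>j. {..<m j}) \<subseteq> Ob" and fin_Ob: "finite Ob"
    and genie: "\<And>w w'. w \<in> PiE {0..K} (\<lambda>j. {..<m j}) \<Longrightarrow> w' \<in> PiE {0..K} (\<lambda>j. {..<m j}) \<Longrightarrow>
      \<forall>i\<in>T. dec i (received K n N enc i w) = w i \<Longrightarrow> \<forall>i\<in>T. dec i (received K n N enc i w') = w' i \<Longrightarrow>
      obs w = obs w' \<Longrightarrow> \<forall>j\<in>{0..K} - T. w j = w' j \<Longrightarrow> w = w'"
  shows "card {w \<in> PiE {0..K} (\<lambda>j. {..<m j}). \<forall>i\<in>T. dec i (received K n N enc i w) = w i}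
    \<le> card Ob * card (PiE ({0..K} - T) (\<lambda>j. {..<m j}))"
proof -
  define Good where "Good = {w \<in> PiE {0..K} (\<lambda>j. {..<m j}). \<forall>i\<in>T. dec i (received K n N enc i w) = w i}"
  define f where "f w = (obs w, restrict w ({0..K} - T))" for w
  have "inj_on f Good"
  proof (rule inj_onI)
    fix w w' assume "w \<in> Good" "w' \<in> Good" "f w = f w'"
    moreover have "w j = w' j" if "restrict w ({0..K} - T) = restrict w' ({0..K} - T)" "j \<in> {0..K} - T" for j
      using fun_cong[OF that(1), of j] that(2) by simp
    ultimately show "w = w'"
      using genie by (auto simp: Good_def f_def)
  qed
  moreover have "f ` Good \<subseteq> Ob \<times> PiE ({0..K} - T) (\<lambda>j. {..<m j})"
  proof (rule image_subsetI)
    fix w assume "w \<in> Good"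
    then show "f w \<in> Ob \<times> PiE ({0..K} - T) (\<lambda>j. {..<m j})"
      using obs by (auto simp: f_def Good_def restrict_PiE_iff PiE_mem)
  qed
  ultimately have "card Good \<le> card (Ob \<times> PiE ({0..K} - T) (\<lambda>j. {..<m j}))"
    using fin_Ob by (intro card_inj_on_le) (auto simp: finite_PiE)
  then show ?thesis
    by (simp add: Good_def card_cartesian_product)
qed

lemma code_size_bound:
  fixes obs :: "(nat \<Rightarrow> nat) \<Rightarrow> 'o"
  assumes T: "T \<subseteq> {0..K}" and m_pos: "\<forall>j\<le>K. 0 < m j"
    and err: "\<forall>i\<in>T. err_prob K n N m enc dec i \<le> \<epsilon>"
    and obs: "obs ` PiE {0..K} (\<lambda>j. {..<m j}) \<subseteq> Ob" and fin_Ob: "finite Ob"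
    and genie: "\<And>w w'. w \<in> PiE {0..K} (\<lambda>j. {..<m j}) \<Longrightarrow> w' \<in> PiE {0..K} (\<lambda>j. {..<m j}) \<Longrightarrow>
      \<forall>i\<in>T. dec i (received K n N enc i w) = w i \<Longrightarrow> \<forall>i\<in>T. dec i (received K n N enc i w') = w' i \<Longrightarrow>
      obs w = obs w' \<Longrightarrow> \<forall>j\<in>{0..K} - T. w j = w' j \<Longrightarrow> w = w'"
  shows "(1 - real (card T) * \<epsilon>) * (\<Prod>j\<in>T. real (m j)) \<le> real (card Ob)"
proof -
  define W where "W = PiE {0..K} (\<lambda>j. {..<m j})"
  define P where "P = PiE ({0..K} - T) (\<lambda>j. {..<m j})"
  define Good where "Good = {w \<in> W. \<forall>i\<in>T. dec i (received K n N enc i w) = w i}"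
  have fin_T: "finite T"
    using T by (rule finite_subset) simp
  have "card W = (\<Prod>j\<in>T \<union> ({0..K} - T). m j)"
    using T by (simp add: W_def card_PiE Un_absorb1)
  also have "\<dots> = (\<Prod>j\<in>T. m j) * (\<Prod>j\<in>{0..K} - T. m j)"
    by (rule prod.union_disjoint) (auto simp: fin_T)
  also have "(\<Prod>j\<in>{0..K} - T. m j) = card P"
    by (simp add: P_def card_PiE)
  finally have "((1 - real (card T) * \<epsilon>) * (\<Prod>j\<in>T. real (m j))) * real (card P) \<le> real (card Good)"
    using card_correctly_decoded_ge[OF T m_pos err] by (simp add: W_def Good_def mult.assoc)
  moreover have "card Good \<le> card Ob * card P"
    unfolding Good_def W_def P_def by (rule card_correctly_decoded_le[OF obs fin_Ob genie])
  then have "real (card Good) \<le> real (card Ob) * real (card P)"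
    by (simp only: of_nat_le_iff flip: of_nat_mult)
  ultimately have "((1 - real (card T) * \<epsilon>) * (\<Prod>j\<in>T. real (m j))) * real (card P)
      \<le> real (card Ob) * real (card P)"
    by (rule order_trans)
  then show ?thesis
    by (rule mult_right_le_imp_le) (use m_pos in \<open>simp add: P_def card_PiE prod_pos del: of_nat_prod\<close>)
qed

lemma sum_rates_le_of_code:
  assumes T: "T \<subseteq> {0..K}" and rates: "\<forall>i\<le>K. 2 powr (real N * r i) \<le> real (m i)"
    and size: "(\<Prod>j\<in>T. real (m j)) \<le> 2 * 2 ^ (N * E)"
  shows "real N * (\<Sum>j\<in>T. r j) \<le> real N * real E + 1"
proof -
  have "2 powr (real N * (\<Sum>j\<in>T. r j)) = (\<Prod>j\<in>T. 2 powr (real N * r j))"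
    by (simp add: sum_distrib_left powr_sum)
  also have "\<dots> \<le> (\<Prod>j\<in>T. real (m j))"
    using rates T by (intro prod_mono) auto
  also have "\<dots> \<le> 2 * 2 ^ (N * E)"
    by (rule size)
  also have "\<dots> = 2 powr (real N * real E + 1)"
    by (simp add: powr_add powr_realpow[symmetric] mult.commute)
  finally show ?thesis
    by simp
qed

lemma sum_rates_le_of_code_size_bound:
  assumes ach: "achievable K n r" and T: "T \<subseteq> {0..K}"
    and bound: "\<And>N m enc dec \<epsilon>. \<forall>j\<le>K. 0 < m j \<Longrightarrow> \<forall>i\<in>T. err_prob K n N m enc dec i \<le> \<epsilon> \<Longrightarrow>
      (1 - real (card T) * \<epsilon>) * (\<Prod>j\<in>T. real (m j)) \<le> 2 ^ (N * E)"
  shows "(\<Sum>j\<in>T. r j) \<le> real E"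
proof -
  define \<epsilon> :: real where "\<epsilon> = 1 / (2 * (real K + 1))"
  have "\<epsilon> > 0"
    by (simp add: \<epsilon>_def)
  then obtain N0 where N0: "\<forall>N\<ge>N0. \<exists>m enc dec. (\<forall>i\<le>K. 2 powr (real N * r i) \<le> real (m i)) \<and>
      (\<forall>i\<le>K. err_prob K n N m enc dec i \<le> \<epsilon>)"
    using ach unfolding achievable_def by blast
  have "card T \<le> K + 1"
    using card_mono[OF _ T] by simp
  then have half: "1 / 2 \<le> 1 - real (card T) * \<epsilon>"
    by (simp add: \<epsilon>_def field_simps)
  have excess: "real N * ((\<Sum>j\<in>T. r j) - real E) \<le> 1" if N_ge: "N \<ge> N0" for N
  proof -
    obtain m enc dec where m: "\<forall>i\<le>K. 2 powr (real N * r i) \<le> real (m i)"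
      and err: "\<forall>i\<le>K. err_prob K n N m enc dec i \<le> \<epsilon>"
      using N0 N_ge by blast
    have err_T: "\<forall>i\<in>T. err_prob K n N m enc dec i \<le> \<epsilon>"
      using err T by auto
    have m_pos: "\<forall>j\<le>K. 0 < m j"
      using m by (smt (verit) of_nat_0_less_iff powr_gt_zero)
    have "1 / 2 * (\<Prod>j\<in>T. real (m j)) \<le> (1 - real (card T) * \<epsilon>) * (\<Prod>j\<in>T. real (m j))"
      by (intro mult_right_mono half prod_nonneg) simp
    also have "\<dots> \<le> 2 ^ (N * E)"
      by (rule bound[OF m_pos err_T])
    finally have "(\<Prod>j\<in>T. real (m j)) \<le> 2 * 2 ^ (N * E)"
      by simp
    then have "real N * (\<Sum>j\<in>T. r j) \<le> real N * real E + 1"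
      by (rule sum_rates_le_of_code[OF T m])
    then show ?thesis
      by (simp add: right_diff_distrib)
  qed
  show ?thesis
  proof (rule ccontr)
    assume contra: "\<not> ?thesis"
    then obtain N where "1 < real N * ((\<Sum>j\<in>T. r j) - real E)"
      using ex_less_of_nat_mult[of "(\<Sum>j\<in>T. r j) - real E" 1] by auto
    moreover have "real N * ((\<Sum>j\<in>T. r j) - real E) \<le> real (max N0 N) * ((\<Sum>j\<in>T. r j) - real E)"
      using contra by (intro mult_right_mono) auto
    ultimately show False
      using excess[of "max N0 N"] by simp
  qed
qed

section \<open>Outputs of the deterministic channel\<close>

lemma qmax_ge_cross: "i \<le> K \<Longrightarrow> n 0 i \<le> qmax K n"
  unfolding qmax_def by (cases "i = 0") (auto intro!: Max_ge)

lemma received_direct_eq: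
  assumes "i \<noteq> 0" and "\<forall>t<N. \<forall>b<n i i. enc i (w i) t b = enc i (w' i) t b"
  shows "received K n N enc i w = received K n N enc i w'"
proof (intro ext)
  fix t r
  have "r - (qmax K n - n i i) < n i i" if "r < qmax K n" "qmax K n - n i i \<le> r"
    using that by linarith
  then show "received K n N enc i w t r = received K n N enc i w' t r"
    using assms by (auto simp: received_def chan_out_def shiftv_def)
qed

text \<open>Level k (counted from the top, 1 \<le> k \<le> qmax K n) of receiver 0 is row qmax K n - k;
  user j reaches it iff k \<le> n 0 j, and then with its input bit n 0 j - k.\<close>
definition level_ones :: "nat \<Rightarrow> (nat \<Rightarrow> nat \<Rightarrow> nat) \<Rightarrow> (nat \<Rightarrow> nat \<Rightarrow> nat \<Rightarrow> nat \<Rightarrow> bool)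
    \<Rightarrow> (nat \<Rightarrow> nat) \<Rightarrow> nat \<Rightarrow> nat \<Rightarrow> nat set" where
  "level_ones K n enc w t k = {j \<in> {0..K}. k \<le> n 0 j \<and> enc j (w j) t (n 0 j - k)}"

lemma received_cross_level:
  assumes "1 \<le> k" "k \<le> qmax K n"
  shows "received K n N enc 0 w t (qmax K n - k) = (t < N \<and> odd (card (level_ones K n enc w t k)))"
proof -
  have "shiftv (qmax K n) (qmax K n - n 0 j) (enc j (w j) t) (qmax K n - k)
      = (k \<le> n 0 j \<and> enc j (w j) t (n 0 j - k))" if "j \<in> {0..K}" for j
  proof -
    have "n 0 j \<le> qmax K n"
      using that by (simp add: qmax_ge_cross)
    moreover from this have "qmax K n - k - (qmax K n - n 0 j) = n 0 j - k"
      using assms by linarith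
    ultimately show ?thesis
      using assms by (auto simp: shiftv_def)
  qed
  then show ?thesis
    unfolding received_def chan_out_def level_ones_def by (simp cong: Collect_cong conj_cong)
qed

lemma received_cross_eq:
  assumes "\<forall>t<N. \<forall>k\<in>{1..qmax K n}.
    odd (card (level_ones K n enc w t k)) = odd (card (level_ones K n enc w' t k))"
  shows "received K n N enc 0 w = received K n N enc 0 w'"
proof (intro ext)
  fix t r
  show "received K n N enc 0 w t r = received K n N enc 0 w' t r"
  proof (cases "r < qmax K n")
    case True
    then have "qmax K n - r \<in> {1..qmax K n}" and "r = qmax K n - (qmax K n - r)"
      by auto
    then show ?thesis
      using assms received_cross_level[of "qmax K n - r" K n N enc _ t] by (metis atLeastAtMost_iff)
  next
    case False
    then show ?thesis
      by (simp add: received_def chan_out_def shiftv_def)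
  qed
qed

lemma direct_code_size_bound:
  assumes i: "i \<noteq> 0" "i \<le> K" and m_pos: "\<forall>j\<le>K. 0 < m j"
    and err: "\<forall>i'\<in>{i}. err_prob K n N m enc dec i' \<le> \<epsilon>"
  shows "(1 - real (card {i}) * \<epsilon>) * (\<Prod>j\<in>{i}. real (m j)) \<le> 2 ^ (N * n i i)"
proof -
  define P where "P = {..<N} \<times> {..<n i i}"
  define obs where "obs w = restrict (\<lambda>(t, b). enc i (w i) t b) P" for w :: "nat \<Rightarrow> nat"
  have "(1 - real (card {i}) * \<epsilon>) * (\<Prod>j\<in>{i}. real (m j)) \<le> real (card (PiE P (\<lambda>_. UNIV :: bool set)))"
  proof (rule code_size_bound[where obs = obs])
    fix w w' assume w: "w \<in> PiE {0..K} (\<lambda>j. {..<m j})" and w': "w' \<in> PiE {0..K} (\<lambda>j. {..<m j})"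
      and decoded: "\<forall>i'\<in>{i}. dec i' (received K n N enc i' w) = w i'"
      and decoded': "\<forall>i'\<in>{i}. dec i' (received K n N enc i' w') = w' i'"
      and "obs w = obs w'" and others: "\<forall>j\<in>{0..K} - {i}. w j = w' j"
    have "enc i (w i) t b = enc i (w' i) t b" if "t < N" "b < n i i" for t b
      using that fun_cong[OF \<open>obs w = obs w'\<close>, of "(t, b)"] by (simp add: obs_def P_def)
    then have "received K n N enc i w = received K n N enc i w'"
      using i by (intro received_direct_eq) auto
    then have "w i = w' i"
      using decoded decoded' by simp
    then show "w = w'"
      using w w' others by (intro PiE_ext) auto
  qed (use assms in \<open>auto simp: obs_def P_def finite_PiE\<close>)
  also have "card (PiE P (\<lambda>_. UNIV :: bool set)) = 2 ^ (N * n i i)"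
    by (simp add: P_def card_PiE card_cartesian_product)
  finally show ?thesis
    by simp
qed

section \<open>Genie-aided decoding of user 0 and a set S of interferers\<close>

definition present_levels :: "nat \<Rightarrow> (nat \<Rightarrow> nat \<Rightarrow> nat) \<Rightarrow> nat set \<Rightarrow> nat set" where
  "present_levels K n S = {k \<in> {1..qmax K n}. k \<le> n 0 0 \<or> (\<exists>j\<in>S. k \<le> n 0 j)}"

definition hidden_bits :: "(nat \<Rightarrow> nat \<Rightarrow> nat) \<Rightarrow> nat set \<Rightarrow> (nat \<times> nat) set" where
  "hidden_bits n S = (SIGMA i:S. {n 0 i..<n i i})"

text \<open>A pair (k, i) stands for the input bit n 0 i - k of user i, which arrives at level k of
  receiver 0.\<close>
definition colliding_bits :: "nat \<Rightarrow> (nat \<Rightarrow> nat \<Rightarrow> nat) \<Rightarrow> nat set \<Rightarrow> (nat \<times> nat) set" where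
  "colliding_bits K n S = (SIGMA k:{1..qmax K n}. U K n k \<inter> S - {Min (U K n k \<inter> S)})"

definition genie_observation :: "nat \<Rightarrow> (nat \<Rightarrow> nat \<Rightarrow> nat) \<Rightarrow> nat set \<Rightarrow> nat
    \<Rightarrow> (nat \<Rightarrow> nat \<Rightarrow> nat \<Rightarrow> nat \<Rightarrow> bool) \<Rightarrow> (nat \<Rightarrow> nat)
    \<Rightarrow> (nat \<times> nat \<Rightarrow> bool) \<times> (nat \<times> nat \<times> nat \<Rightarrow> bool) \<times> (nat \<times> nat \<times> nat \<Rightarrow> bool)" where
  "genie_observation K n S N enc w =
     (restrict (\<lambda>(t, k). odd (card (level_ones K n enc w t k))) ({..<N} \<times> present_levels K n S),
      restrict (\<lambda>(t, i, b). enc i (w i) t b) ({..<N} \<times> hidden_bits n S),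
      restrict (\<lambda>(t, k, i). enc i (w i) t (n 0 i - k)) ({..<N} \<times> colliding_bits K n S))"

definition genie_observations :: "nat \<Rightarrow> (nat \<Rightarrow> nat \<Rightarrow> nat) \<Rightarrow> nat set \<Rightarrow> nat
    \<Rightarrow> ((nat \<times> nat \<Rightarrow> bool) \<times> (nat \<times> nat \<times> nat \<Rightarrow> bool) \<times> (nat \<times> nat \<times> nat \<Rightarrow> bool)) set" where
  "genie_observations K n S N =
     PiE ({..<N} \<times> present_levels K n S) (\<lambda>_. UNIV) \<times> PiE ({..<N} \<times> hidden_bits n S) (\<lambda>_. UNIV)
       \<times> PiE ({..<N} \<times> colliding_bits K n S) (\<lambda>_. UNIV)"

lemma genie_observation_in: "genie_observation K n S N enc w \<in> genie_observations K n S N"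
  by (simp add: genie_observation_def genie_observations_def)

lemma finite_genie_bits:
  assumes "S \<subseteq> {1..K}"
  shows "finite (present_levels K n S)" "finite (hidden_bits n S)" "finite (colliding_bits K n S)"
  using finite_subset[OF assms]
  by (auto simp: present_levels_def hidden_bits_def colliding_bits_def)

lemma card_genie_observations:
  assumes "S \<subseteq> {1..K}"
  shows "finite (genie_observations K n S N)"
    and "card (genie_observations K n S N)
      = 2 ^ (N * (card (present_levels K n S) + card (hidden_bits n S) + card (colliding_bits K n S)))"
  using finite_genie_bits[OF assms]
  by (simp_all add: genie_observations_def finite_PiE card_cartesian_product card_PiE power_add
      add_mult_distrib2)

locale genie_aided_pair =
  fixes K :: nat and n :: "nat \<Rightarrow> nat \<Rightarrow> nat" and S :: "nat set" and N :: nat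
    and enc :: "nat \<Rightarrow> nat \<Rightarrow> nat \<Rightarrow> nat \<Rightarrow> bool" and dec :: "nat \<Rightarrow> (nat \<Rightarrow> nat \<Rightarrow> bool) \<Rightarrow> nat"
    and w w' :: "nat \<Rightarrow> nat"
  assumes S_sub: "S \<subseteq> {1..K}"
    and decoded: "\<And>i. i \<in> insert 0 S \<Longrightarrow> dec i (received K n N enc i w) = w i"
    and decoded': "\<And>i. i \<in> insert 0 S \<Longrightarrow> dec i (received K n N enc i w') = w' i"
    and others_eq: "\<And>j. j \<in> {0..K} - insert 0 S \<Longrightarrow> w j = w' j"
    and observation_eq: "genie_observation K n S N enc w = genie_observation K n S N enc w'"
begin

lemma present_levels_eq:
  assumes "t < N" "k \<in> present_levels K n S"
  shows "odd (card (level_ones K n enc w t k)) = odd (card (level_ones K n enc w' t k))"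
  using assms fun_cong[OF arg_cong[where f = fst, OF observation_eq], of "(t, k)"]
  by (simp add: genie_observation_def)

lemma hidden_bits_eq:
  assumes "t < N" "(i, b) \<in> hidden_bits n S"
  shows "enc i (w i) t b = enc i (w' i) t b"
  using assms fun_cong[OF arg_cong[where f = "fst \<circ> snd", OF observation_eq], of "(t, i, b)"]
  by (simp add: genie_observation_def)

lemma colliding_bits_eq:
  assumes "t < N" "(k, i) \<in> colliding_bits K n S"
  shows "enc i (w i) t (n 0 i - k) = enc i (w' i) t (n 0 i - k)"
  using assms fun_cong[OF arg_cong[where f = "snd \<circ> snd", OF observation_eq], of "(t, k, i)"]
  by (simp add: genie_observation_def)

lemma cross_gain_le_qmax:
  assumes "i \<in> insert 0 S"
  shows "n 0 i \<le> qmax K n"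
proof (rule qmax_ge_cross)
  show "i \<le> K"
    using assms S_sub by auto
qed

lemma level_parity_eq:
  assumes "t < N" and "k \<in> {1..qmax K n}"
  shows "odd (card (level_ones K n enc w t k)) = odd (card (level_ones K n enc w' t k))"
proof (cases "k \<in> present_levels K n S")
  case True
  with assms(1) show ?thesis
    by (rule present_levels_eq)
next
  case False
  then have absent: "n 0 j < k" if "j \<in> insert 0 S" for j
    using that assms(2) by (auto simp: present_levels_def)
  have "level_ones K n enc w t k = level_ones K n enc w' t k"
    unfolding level_ones_def
  proof (intro Collect_cong conj_cong refl)
    fix j assume "j \<in> {0..K}" "k \<le> n 0 j"
    moreover from this have "j \<notin> insert 0 S"
      using absent leD by blast
    ultimately show "enc j (w j) t (n 0 j - k) = enc j (w' j) t (n 0 j - k)"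
      using others_eq by simp
  qed
  then show ?thesis
    by simp
qed

lemma message_0_eq: "w 0 = w' 0"
proof -
  have "received K n N enc 0 w = received K n N enc 0 w'"
    by (intro received_cross_eq allI impI ballI level_parity_eq)
  then show ?thesis
    using decoded[of 0] decoded'[of 0] by simp
qed

lemma message_eq_outside: "j \<in> {0..K} \<Longrightarrow> j \<notin> S \<Longrightarrow> w j = w' j"
  using message_0_eq others_eq by (cases "j = 0") auto

lemma message_eq_if_bits_eq:
  assumes "i \<in> S" and "\<forall>t<N. \<forall>b<n i i. enc i (w i) t b = enc i (w' i) t b"
  shows "w i = w' i"
proof -
  have "i \<noteq> 0"
    using assms(1) S_sub by auto
  then have "received K n N enc i w = received K n N enc i w'"
    using assms(2) by (rule received_direct_eq)
  then show ?thesis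
    using decoded[of i] decoded'[of i] assms(1) by simp
qed

definition agree_from_level :: "nat \<Rightarrow> bool" where
  "agree_from_level k \<longleftrightarrow> (\<forall>i\<in>S. \<forall>t<N. \<forall>b<n i i. b < n 0 i \<longrightarrow> k \<le> n 0 i - b \<longrightarrow>
     enc i (w i) t b = enc i (w' i) t b)"

lemma level_contribution_eq:
  assumes agree: "agree_from_level (Suc k)" and t: "t < N" and k: "1 \<le> k"
    and j: "j \<in> {0..K}" "j \<noteq> Min (U K n k \<inter> S)"
  shows "(k \<le> n 0 j \<and> enc j (w j) t (n 0 j - k)) = (k \<le> n 0 j \<and> enc j (w' j) t (n 0 j - k))"
proof -
  \<comment> \<open>a user of S reaching level k outside U K n k does so with a bit its own receiver never
    sees, and all the bits it does see lie above level k\<close>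
  have message_eq: "w j = w' j" if "j \<in> S" "n j j \<le> n 0 j - k"
  proof (rule message_eq_if_bits_eq[OF that(1)], intro allI impI)
    fix t' b assume "t' < N" "b < n j j"
    with agree that show "enc j (w j) t' b = enc j (w' j) t' b"
      by (auto simp: agree_from_level_def)
  qed
  have colliding: "(k, j) \<in> colliding_bits K n S" if "j \<in> S" "k \<le> n 0 j" "n 0 j - k < n j j"
    using that j k S_sub cross_gain_le_qmax[of j] by (auto simp: colliding_bits_def U_def)
  show ?thesis
  proof (cases "j \<in> S \<and> k \<le> n 0 j")
    case True
    then show ?thesis
      using message_eq colliding colliding_bits_eq[OF t] by (cases "n 0 j - k < n j j") auto
  next
    case False
    then show ?thesis
      using message_eq_outside[OF j(1)] by auto
  qed
qed

text \<open>All other contributions to level k are known, so its parity reveals this last bit.\<close>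
lemma least_user_bit_eq:
  assumes agree: "agree_from_level (Suc k)" and t: "t < N" and k: "1 \<le> k" "k \<le> n 0 i"
    and i: "i \<in> S" "i = Min (U K n k \<inter> S)"
  shows "enc i (w i) t (n 0 i - k) = enc i (w' i) t (n 0 i - k)"
proof -
  define lvl where "lvl v j \<longleftrightarrow> k \<le> n 0 j \<and> enc j (v j) t (n 0 j - k)" for v j
  have "k \<le> qmax K n"
    using k(2) cross_gain_le_qmax[of i] i(1) by auto
  have "lvl w i = lvl w' i"
  proof (rule odd_card_Collect_cancel[of "{0..K}"])
    show "odd (card {j \<in> {0..K}. lvl w j}) = odd (card {j \<in> {0..K}. lvl w' j})"
      using level_parity_eq[OF t] k(1) \<open>k \<le> qmax K n\<close> by (simp add: level_ones_def lvl_def)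
  qed (use i S_sub level_contribution_eq[OF agree t k(1)] in \<open>auto simp: lvl_def\<close>)
  with k(2) show ?thesis
    by (simp add: lvl_def)
qed

lemma agree_from_level_step:
  assumes agree: "agree_from_level (Suc k)"
  shows "agree_from_level k"
  unfolding agree_from_level_def
proof (intro ballI allI impI)
  fix i t b assume i: "i \<in> S" and t: "t < N" and b: "b < n i i" "b < n 0 i" "k \<le> n 0 i - b"
  show "enc i (w i) t b = enc i (w' i) t b"
  proof (cases "k < n 0 i - b")
    case True
    with agree i t b show ?thesis
      by (auto simp: agree_from_level_def)
  next
    case False
    then have b_eq: "b = n 0 i - k" and k: "1 \<le> k" "k \<le> n 0 i"
      using b by auto
    show ?thesis
    proof (cases "i = Min (U K n k \<inter> S)")
      case False
      moreover have "i \<in> U K n k \<inter> S" and "k \<le> qmax K n"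
        using i b b_eq k S_sub cross_gain_le_qmax[of i] by (auto simp: U_def)
      ultimately have "(k, i) \<in> colliding_bits K n S"
        using k by (auto simp: colliding_bits_def)
      with b_eq show ?thesis
        using colliding_bits_eq[OF t] by simp
    next
      case True
      with b_eq show ?thesis
        using least_user_bit_eq[OF agree t k i] by simp
    qed
  qed
qed

lemma agree_from_level_0: "agree_from_level 0"
proof -
  have "agree_from_level (Suc (qmax K n))"
    using cross_gain_le_qmax by (fastforce simp: agree_from_level_def)
  then show ?thesis
    using inc_induct[of 0 "Suc (qmax K n)" agree_from_level] agree_from_level_step by blast
qed

lemma messages_eq: "j \<in> {0..K} \<Longrightarrow> w j = w' j"
proof (cases "j \<in> S")
  case True
  have "enc j (w j) t b = enc j (w' j) t b" if "t < N" "b < n j j" for t b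
  proof (cases "b < n 0 j")
    case True
    with agree_from_level_0 \<open>j \<in> S\<close> that show ?thesis
      by (simp add: agree_from_level_def)
  next
    case False
    with \<open>j \<in> S\<close> that have "(j, b) \<in> hidden_bits n S"
      by (simp add: hidden_bits_def)
    with that show ?thesis
      by (simp add: hidden_bits_eq)
  qed
  with True show ?thesis
    by (intro message_eq_if_bits_eq) auto
qed (rule message_eq_outside)

end

lemma card_hidden_bits: "finite S \<Longrightarrow> card (hidden_bits n S) = (\<Sum>i\<in>S. n i i - n 0 i)"
  by (simp add: hidden_bits_def card_SigmaI)

lemma card_colliding_bits:
  assumes "finite S"
  shows "card (colliding_bits K n S) = (\<Sum>k=1..qmax K n. card (U K n k \<inter> S) - 1)"
proof -
  have "card (A - {Min A}) = card A - 1" if "finite A" for A :: "nat set"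
    using that by (cases "A = {}") (auto simp: card_Diff_singleton)
  with assms show ?thesis
    by (simp add: colliding_bits_def card_SigmaI)
qed

lemma card_present_levels_le:
  assumes S: "S \<subseteq> {1..K}"
  shows "card (present_levels K n S) + (\<Sum>k=1..qmax K n. card (U K n k \<inter> S) - 1)
    \<le> (\<Sum>k=1..n 0 0. f_lvl K n k S) + (\<Sum>j\<in>S. n 0 j - n 0 0)"
proof -
  define q where "q = qmax K n"
  define L where "L = present_levels K n S"
  define c where "c k = card {j \<in> S. k \<le> n 0 j}" for k
  define g where "g k = (if k \<in> L then 1 else 0) + (card (U K n k \<inter> S) - 1)" for k
  have fin_S: "finite S"
    using S by (rule finite_subset) simp
  have q_ge: "n 0 0 \<le> q" "\<forall>j\<in>S. n 0 j \<le> q"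
    using S by (auto simp: q_def subset_iff intro!: qmax_ge_cross)
  have U_le_c: "card (U K n k \<inter> S) \<le> c k" for k
    unfolding c_def U_def by (rule card_mono) (auto simp: fin_S)
  have low: "g k = f_lvl K n k S" if "k \<in> {1..n 0 0}" for k
    using that q_ge by (auto simp: g_def L_def present_levels_def q_def f_lvl_def)
  have high: "g k \<le> c k" if "n 0 0 < k" for k
  proof (cases "k \<in> L")
    case True
    with that obtain j where "j \<in> S" "k \<le> n 0 j"
      by (auto simp: L_def present_levels_def)
    with fin_S have "1 \<le> c k"
      by (auto simp: c_def card_gt_0_iff Suc_le_eq)
    with True show ?thesis
      using U_le_c[of k] by (simp add: g_def)
  qed (use U_le_c[of k] in \<open>simp add: g_def\<close>)
  have "card L = (\<Sum>k=1..q. if k \<in> L then 1 else 0)"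
    by (simp add: sum.If_cases L_def present_levels_def q_def Int_absorb1 Int_def)
  then have "card L + (\<Sum>k=1..q. card (U K n k \<inter> S) - 1) = (\<Sum>k=1..q. g k)"
    by (simp add: g_def sum.distrib)
  also have "\<dots> = (\<Sum>k=1..n 0 0. g k) + (\<Sum>k\<in>{n 0 0<..q}. g k)"
  proof -
    have "{1..q} = {1..n 0 0} \<union> {n 0 0<..q}"
      using q_ge by auto
    moreover have "sum g ({1..n 0 0} \<union> {n 0 0<..q}) = sum g {1..n 0 0} + sum g {n 0 0<..q}"
      by (rule sum.union_disjoint) auto
    ultimately show ?thesis
      by simp
  qed
  also have "\<dots> \<le> (\<Sum>k=1..n 0 0. f_lvl K n k S) + (\<Sum>k\<in>{n 0 0<..q}. c k)"
    using low high by (intro add_mono sum_mono) auto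
  also have "(\<Sum>k\<in>{n 0 0<..q}. c k) = (\<Sum>j\<in>S. n 0 j - n 0 0)"
    unfolding c_def using fin_S q_ge(2) by (rule sum_card_ge_eq_sum_diff)
  finally show ?thesis
    by (simp add: L_def q_def)
qed

lemma genie_bits_le:
  assumes "S \<subseteq> {1..K}"
  shows "card (present_levels K n S) + card (hidden_bits n S) + card (colliding_bits K n S)
    \<le> (\<Sum>i\<in>S. f_free n i) + (\<Sum>k=1..n 0 0. f_lvl K n k S)"
proof -
  have "finite S"
    using assms by (rule finite_subset) simp
  then show ?thesis
    using card_present_levels_le[OF assms, where n = n]
    by (simp add: card_hidden_bits card_colliding_bits f_free_def sum.distrib)
qed

lemma genie_code_size_bound:
  assumes S: "S \<subseteq> {1..K}" and m_pos: "\<forall>j\<le>K. 0 < m j"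
    and err: "\<forall>i\<in>insert 0 S. err_prob K n N m enc dec i \<le> \<epsilon>"
  shows "(1 - real (card (insert 0 S)) * \<epsilon>) * (\<Prod>j\<in>insert 0 S. real (m j))
    \<le> 2 ^ (N * (card (present_levels K n S) + card (hidden_bits n S) + card (colliding_bits K n S)))"
proof -
  have "(1 - real (card (insert 0 S)) * \<epsilon>) * (\<Prod>j\<in>insert 0 S. real (m j))
      \<le> real (card (genie_observations K n S N))"
  proof (rule code_size_bound[where obs = "genie_observation K n S N enc"])
    fix w w' assume w: "w \<in> PiE {0..K} (\<lambda>j. {..<m j})" and w': "w' \<in> PiE {0..K} (\<lambda>j. {..<m j})"
      and "\<forall>i\<in>insert 0 S. dec i (received K n N enc i w) = w i"
      and "\<forall>i\<in>insert 0 S. dec i (received K n N enc i w') = w' i"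
      and "genie_observation K n S N enc w = genie_observation K n S N enc w'"
      and "\<forall>j\<in>{0..K} - insert 0 S. w j = w' j"
    with S interpret genie_aided_pair K n S N enc dec w w'
      by unfold_locales auto
    show "w = w'"
      using w w' messages_eq by (intro PiE_ext) auto
  qed (use assms card_genie_observations(1)[OF S] genie_observation_in in auto)
  then show ?thesis
    by (simp add: card_genie_observations(2)[OF S])
qed

lemma sum_code_size_bound:
  assumes S: "S \<subseteq> {1..K}" and m_pos: "\<forall>j\<le>K. 0 < m j"
    and err: "\<forall>i\<in>insert 0 S. err_prob K n N m enc dec i \<le> \<epsilon>"
  shows "(1 - real (card (insert 0 S)) * \<epsilon>) * (\<Prod>j\<in>insert 0 S. real (m j))
    \<le> 2 ^ (N * ((\<Sum>i\<in>S. f_free n i) + (\<Sum>k=1..n 0 0. f_lvl K n k S)))"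
proof -
  have "(2::real) ^ (N * (card (present_levels K n S) + card (hidden_bits n S) + card (colliding_bits K n S)))
      \<le> 2 ^ (N * ((\<Sum>i\<in>S. f_free n i) + (\<Sum>k=1..n 0 0. f_lvl K n k S)))"
    using genie_bits_le[OF S] by (intro power_increasing mult_le_mono2) auto
  with genie_code_size_bound[OF assms] show ?thesis
    by linarith
qed

lemma closed_outer_bound: "closed (outer_bound K n)"
  unfolding outer_bound_def
  by (intro closed_Collect_conj closed_Collect_all closed_Collect_imp closed_Collect_le
      closed_Collect_eq open_Collect_const continuous_intros) simp_all

lemma sum_rate_le:
  assumes ach: "achievable K n r" and S: "S \<subseteq> {1..K}"
  shows "r 0 + (\<Sum>i\<in>S. r i) \<le> real ((\<Sum>i\<in>S. f_free n i) + (\<Sum>k=1..n 0 0. f_lvl K n k S))"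
proof -
  have "(\<Sum>j\<in>insert 0 S. r j) \<le> real ((\<Sum>i\<in>S. f_free n i) + (\<Sum>k=1..n 0 0. f_lvl K n k S))"
    using S by (intro sum_rates_le_of_code_size_bound[OF ach] sum_code_size_bound) auto
  moreover have "finite S" "0 \<notin> S"
    using S by (auto intro: finite_subset)
  ultimately show ?thesis
    by simp
qed

lemma direct_rate_le:
  assumes ach: "achievable K n r" and "i \<le> K"
  shows "r i \<le> real (n i i)"
proof (cases "i = 0")
  case True
  then show ?thesis
    using sum_rate_le[OF ach, of "{}"] by (simp add: f_lvl_def)
next
  case False
  with assms have "(\<Sum>j\<in>{i}. r j) \<le> real (n i i)"
    by (intro sum_rates_le_of_code_size_bound[OF ach] direct_code_size_bound) auto
  then show ?thesis
    by simp
qed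

theorem lemma1:
  fixes K :: nat and n :: "nat \<Rightarrow> nat \<Rightarrow> nat"
  shows "capacity_region K n \<subseteq> outer_bound K n"
proof -
  have "{r. achievable K n r} \<subseteq> outer_bound K n"
    using sum_rate_le direct_rate_le by (auto simp: outer_bound_def achievable_def)
  then show ?thesis
    unfolding capacity_region_def using closed_outer_bound by (rule closure_minimal)
qed

end
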